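(* Let $\mathrm{GL}_3(\mathbb R)$ act by conjugation on $\mathfrak{sl}_3(\mathbb R)$ and let $\mathfrak s_{\mathbb R}:=\left\{A=\begin{pmatrix} a&1&0\\ b&a&c\\ d&0&-2a\end{pmatrix}: a,b,c,d\in\mathbb R\right\}$ (so $a=A_{11},b=A_{21},c=A_{23},d=A_{31}$). Then the $C^\infty(\mathfrak s_{\mathbb R})$-module of vector fields on $\mathfrak s_{\mathbb R}$ strongly tangential to this action is generated by the four vector fields $v_1=c\,\partial_c-d\,\partial_d$, $v_2=-a\,v_1$, $v_3=\tfrac d2\partial_a-3ad\,\partial_b+(9a^2-b)\partial_c$, $v_4=-\tfrac c2\partial_a+3ac\,\partial_b+(b-9a^2)\partial_d$.
   Context: Strongly tangential vector fields: let a Lie group $G$ with Lie algebra $\mathfrak g$ act on a manifold $X$ and let $S\subset X$ be a locally closed submanifold. For a smooth map $\varphi:S\to\mathfrak g$ define $\alpha_\varphi(s):=d_e(a_s)(\varphi(s))\in T_sX$, where $a_s:G\to X$, $g\mapsto gs$ (here $a_s(g)=gsg^{-1}$, so $\alpha_\varphi(s)=[\varphi(s),s]$). If $\alpha_\varphi(s)\in T_sS$ for all $s\in S$, the vector field $\alpha_\varphi$ on $S$ is called strongly tangential to the action of $G$. *)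

theory Defs
  imports "HOL-Analysis.Analysis"
begin

fun Ck :: "nat \<Rightarrow> ('a::euclidean_space \<Rightarrow> 'b::real_normed_vector) \<Rightarrow> bool" where
  "Ck 0 f = continuous_on UNIV f"
| "Ck (Suc k) f = (\<exists>f'. (\<forall>x. (f has_derivative f' x) (at x)) \<and> (\<forall>v. Ck k (\<lambda>x. f' x v)))"

definition smooth :: "('a::euclidean_space \<Rightarrow> 'b::real_normed_vector) \<Rightarrow> bool" where
  "smooth f \<longleftrightarrow> (\<forall>k. Ck k f)"

definition sR :: "real^4 \<Rightarrow> real^3^3" where
  "sR p = (let a = p$1; b = p$2; c = p$3; d = p$4 in
     vector [vector [a, 1, 0], vector [b, a, c], vector [d, 0, -2*a]])"

text \<open>alpha_phi(s) = [phi(s), s] (infinitesimal conjugation action of gl_3).\<close>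
definition alpha :: "(real^4 \<Rightarrow> real^3^3) \<Rightarrow> real^4 \<Rightarrow> real^3^3" where
  "alpha \<phi> p = \<phi> p ** sR p - sR p ** \<phi> p"

definition sR_tangent :: "(real^3^3) set" where
  "sR_tangent = {M. M$1$2 = 0 \<and> M$1$3 = 0 \<and> M$3$2 = 0 \<and> M$2$2 = M$1$1 \<and> M$3$3 = -2 * M$1$1}"

text \<open>Coordinates of a tangent vector w.r.t. d/da, d/db, d/dc, d/dd.\<close>
definition tcoords :: "real^3^3 \<Rightarrow> real^4" where
  "tcoords M = vector [M$1$1, M$2$1, M$2$3, M$3$1]"

definition strongly_tangential :: "(real^4 \<Rightarrow> real^4) set" where
  "strongly_tangential = {V. \<exists>\<phi>. smooth \<phi> \<and> (\<forall>p. alpha \<phi> p \<in> sR_tangent)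
                                 \<and> (\<forall>p. V p = tcoords (alpha \<phi> p))}"

definition v1 :: "real^4 \<Rightarrow> real^4" where
  "v1 p = vector [0, 0, p$3, - p$4]"
definition v2 :: "real^4 \<Rightarrow> real^4" where
  "v2 p = (- p$1) *\<^sub>R v1 p"
definition v3 :: "real^4 \<Rightarrow> real^4" where
  "v3 p = vector [p$4 / 2, -3 * p$1 * p$4, 9 * p$1^2 - p$2, 0]"
definition v4 :: "real^4 \<Rightarrow> real^4" where
  "v4 p = vector [- p$3 / 2, 3 * p$1 * p$3, 0, p$2 - 9 * p$1^2]"

end

theory Submission
  imports Defs
begin

text \<open>A smooth \<open>\<phi>\<close> yields a tangential field exactly when the commutator \<open>[\<phi>(p), s(p)]\<close> lies
  in the tangent space of \<open>s\<^sub>\<real>\<close>. These are four independent conditions, linear in the entries of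
  \<open>\<phi>(p)\<close>, which can be solved for \<open>\<phi>\<^sub>2\<^sub>1, \<phi>\<^sub>2\<^sub>2, \<phi>\<^sub>2\<^sub>3, \<phi>\<^sub>3\<^sub>1\<close>. After substitution the coordinates of the
  commutator are \<open>(\<phi>\<^sub>1\<^sub>1 - \<phi>\<^sub>3\<^sub>3) v\<^sub>1 + 3\<phi>\<^sub>1\<^sub>2 v\<^sub>2 + \<phi>\<^sub>1\<^sub>3 v\<^sub>3 + \<phi>\<^sub>3\<^sub>2 v\<^sub>4\<close>, with smooth coefficients.
  Conversely, prescribing these four free entries as arbitrary smooth functions and the others
  by the solved conditions gives a smooth \<open>\<phi>\<close> realising any such combination.\<close>

lemma norm_axis: "norm (axis i x :: 'b::real_normed_vector^'n) = norm x"
proof -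
  have "(\<lambda>j. (norm (axis i x $ j))\<^sup>2) = (\<lambda>j. if j = i then (norm x)\<^sup>2 else 0)"
    by (auto simp: axis_def)
  then show ?thesis by (simp only: norm_vec_def L2_set_def) simp
qed

lemma bounded_linear_axis: "bounded_linear (axis i :: 'b::real_normed_vector \<Rightarrow> 'b^'n)"
  by (rule bounded_linear_intro[where K=1]) (simp_all add: norm_axis, simp_all add: axis_def vec_eq_iff)

lemma sum_axis_nth: "(\<Sum>i\<in>UNIV. axis i (x $ i)) = (x::'b::real_normed_vector^'n)"
  by (simp add: vec_eq_iff sum_component axis_def if_distrib sum.delta cong: if_cong)

lemma Ck_SucI:
  "(\<And>x. (f has_derivative f' x) (at x)) \<Longrightarrow> (\<And>v. Ck k (\<lambda>x. f' x v)) \<Longrightarrow> Ck (Suc k) f"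
  by auto

lemma Ck_imp_continuous_on: "Ck k f \<Longrightarrow> continuous_on UNIV f"
proof (cases k)
  case (Suc n)
  moreover assume "Ck k f"
  ultimately obtain f' where "\<And>x. (f has_derivative f' x) (at x)"
    by auto
  then show ?thesis
    by (meson continuous_at_imp_continuous_on has_derivative_continuous)
qed simp

lemma Ck_SucD: "Ck (Suc k) f \<Longrightarrow> Ck k f"
proof (induction k arbitrary: f)
  case 0
  show ?case using Ck_imp_continuous_on[OF "0.prems"] by simp
next
  case (Suc k)
  obtain f' where df: "\<And>x. (f has_derivative f' x) (at x)"
    and cf: "\<And>v. Ck (Suc k) (\<lambda>x. f' x v)"
    using Suc.prems by auto
  show ?case
  proof (rule Ck_SucI)
    show "(f has_derivative f' x) (at x)" for x by (rule df)
    show "Ck k (\<lambda>x. f' x v)" for v using cf by (rule Suc.IH)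
  qed
qed

lemma Ck_bounded_linear: "bounded_linear L \<Longrightarrow> Ck k f \<Longrightarrow> Ck k (\<lambda>x. L (f x))"
proof (induction k arbitrary: f)
  case 0
  then show ?case
    by (auto intro: continuous_on_compose2[OF linear_continuous_on])
next
  case (Suc k)
  obtain f' where df: "\<And>x. (f has_derivative f' x) (at x)" and cf: "\<And>v. Ck k (\<lambda>x. f' x v)"
    using Suc.prems(2) by auto
  show ?case
  proof (rule Ck_SucI[where f'="\<lambda>x h. L (f' x h)"])
    show "((\<lambda>x. L (f x)) has_derivative (\<lambda>h. L (f' x h))) (at x)" for x
      using Suc.prems(1) df by (rule bounded_linear.has_derivative)
    show "Ck k (\<lambda>x. L (f' x v))" for v
      using Suc.prems(1) cf by (rule Suc.IH)
  qed
qed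

lemma Ck_const: "Ck k (\<lambda>x. c)"
proof (induction k arbitrary: c)
  case (Suc k)
  show ?case
    by (rule Ck_SucI[where f'="\<lambda>x h. 0"]) (simp_all add: Suc.IH)
qed simp

lemma Ck_ident: "Ck k (\<lambda>x. x)"
proof (cases k)
  case (Suc n)
  have "Ck (Suc n) (\<lambda>x. x)"
    by (rule Ck_SucI[where f'="\<lambda>x h. h"]) (simp_all add: Ck_const)
  with Suc show ?thesis by simp
qed simp

lemma Ck_add: "Ck k f \<Longrightarrow> Ck k g \<Longrightarrow> Ck k (\<lambda>x. f x + g x)"
proof (induction k arbitrary: f g)
  case 0
  then show ?case by (simp add: continuous_on_add)
next
  case (Suc k)
  obtain f' where df: "\<And>x. (f has_derivative f' x) (at x)" and cf: "\<And>v. Ck k (\<lambda>x. f' x v)"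
    using Suc.prems(1) by auto
  obtain g' where dg: "\<And>x. (g has_derivative g' x) (at x)" and cg: "\<And>v. Ck k (\<lambda>x. g' x v)"
    using Suc.prems(2) by auto
  show ?case
  proof (rule Ck_SucI[where f'="\<lambda>x h. f' x h + g' x h"])
    show "((\<lambda>x. f x + g x) has_derivative (\<lambda>h. f' x h + g' x h)) (at x)" for x
      using df dg by (rule has_derivative_add)
    show "Ck k (\<lambda>x. f' x v + g' x v)" for v
      using cf cg by (rule Suc.IH)
  qed
qed

lemma Ck_mult: "Ck k f \<Longrightarrow> Ck k g \<Longrightarrow> Ck k (\<lambda>x. f x * g x :: real)"
proof (induction k arbitrary: f g)
  case 0
  then show ?case by (simp add: continuous_on_mult)
next
  case (Suc k)
  obtain f' where df: "\<And>x. (f has_derivative f' x) (at x)" and cf: "\<And>v. Ck k (\<lambda>x. f' x v)"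
    using Suc.prems(1) by auto
  obtain g' where dg: "\<And>x. (g has_derivative g' x) (at x)" and cg: "\<And>v. Ck k (\<lambda>x. g' x v)"
    using Suc.prems(2) by auto
  have "Ck k f" "Ck k g"
    using Suc.prems by (blast intro: Ck_SucD)+
  show ?case
  proof (rule Ck_SucI[where f'="\<lambda>x h. f x * g' x h + f' x h * g x"])
    show "((\<lambda>x. f x * g x) has_derivative (\<lambda>h. f x * g' x h + f' x h * g x)) (at x)" for x
      using df dg by (rule has_derivative_mult)
    show "Ck k (\<lambda>x. f x * g' x v + f' x v * g x)" for v
      using Suc.IH[OF \<open>Ck k f\<close> cg] Suc.IH[OF cf \<open>Ck k g\<close>] by (rule Ck_add)
  qed
qed

lemma Ck_sum: "finite S \<Longrightarrow> (\<And>i. i \<in> S \<Longrightarrow> Ck k (g i)) \<Longrightarrow> Ck k (\<lambda>x. \<Sum>i\<in>S. g i x)"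
  by (induction S rule: finite_induct) (auto intro: Ck_const Ck_add)

lemma Ck_vec:
  fixes f :: "'a::euclidean_space \<Rightarrow> 'b::real_normed_vector^'n"
  assumes "\<And>i. Ck k (\<lambda>x. f x $ i)"
  shows "Ck k f"
proof -
  have "Ck k (\<lambda>x. \<Sum>i\<in>UNIV. axis i (f x $ i))"
    by (intro Ck_sum Ck_bounded_linear[OF bounded_linear_axis] assms) simp
  then show ?thesis by (simp only: sum_axis_nth)
qed

lemma smooth_bounded_linear: "bounded_linear L \<Longrightarrow> smooth f \<Longrightarrow> smooth (\<lambda>x. L (f x))"
  by (simp add: smooth_def Ck_bounded_linear)

lemma smooth_vec_nth: "smooth f \<Longrightarrow> smooth (\<lambda>x. f x $ i)"
  by (rule smooth_bounded_linear[OF bounded_linear_vec_nth])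

lemma smooth_coordinate: "smooth (\<lambda>x. x $ i)"
  by (rule smooth_vec_nth) (simp add: smooth_def Ck_ident)

lemma smooth_const: "smooth (\<lambda>x. c)"
  by (simp add: smooth_def Ck_const)

lemma smooth_add: "smooth f \<Longrightarrow> smooth g \<Longrightarrow> smooth (\<lambda>x. f x + g x)"
  by (simp add: smooth_def Ck_add)

lemma smooth_diff: "smooth f \<Longrightarrow> smooth g \<Longrightarrow> smooth (\<lambda>x. f x - g x)"
  using smooth_add[OF _ smooth_bounded_linear[OF bounded_linear_minus[OF bounded_linear_ident]]]
  by fastforce

lemma smooth_mult: "smooth f \<Longrightarrow> smooth g \<Longrightarrow> smooth (\<lambda>x. f x * g x :: real)"
  by (simp add: smooth_def Ck_mult)

lemma smooth_divide_const: "smooth f \<Longrightarrow> smooth (\<lambda>x. f x / (c::real))"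
  using smooth_mult[OF _ smooth_const, of f "inverse c"] by (simp add: field_simps)

lemma smooth_vec:
  fixes f :: "'a::euclidean_space \<Rightarrow> 'b::real_normed_vector^'n"
  shows "(\<And>i. smooth (\<lambda>x. f x $ i)) \<Longrightarrow> smooth f"
  by (simp add: smooth_def Ck_vec)

lemma smooth_vector_3:
  assumes "smooth f" "smooth g" "smooth h"
  shows "smooth (\<lambda>x. vector [f x, g x, h x] :: 'b::real_normed_vector^3)"
proof (rule smooth_vec)
  fix i :: 3
  from assms show "smooth (\<lambda>x. (vector [f x, g x, h x] :: 'b^3) $ i)"
    using exhaust_3[of i] by auto
qed

lemma vector_4 [simp]:
  "(vector [a, b, c, d] :: 'a::zero^4) $ 1 = a" "(vector [a, b, c, d] :: 'a^4) $ 2 = b"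
  "(vector [a, b, c, d] :: 'a^4) $ 3 = c" "(vector [a, b, c, d] :: 'a^4) $ 4 = d"
  by (simp_all add: vector_def)

lemma sR_nth [simp]:
  "sR p $1$1 = p$1" "sR p $1$2 = 1" "sR p $1$3 = 0"
  "sR p $2$1 = p$2" "sR p $2$2 = p$1" "sR p $2$3 = p$3"
  "sR p $3$1 = p$4" "sR p $3$2 = 0" "sR p $3$3 = -2 * p$1"
  by (simp_all add: sR_def Let_def)

lemma commutator_sR_nth:
  fixes X :: "real^3^3" and p :: "real^4"
  defines "M \<equiv> X ** sR p - sR p ** X"
  shows "M$1$1 = p$2 * X$1$2 + p$4 * X$1$3 - X$2$1"
    "M$1$2 = X$1$1 - X$2$2"
    "M$1$3 = p$3 * X$1$2 - 3 * p$1 * X$1$3 - X$2$3"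
    "M$2$1 = p$2 * (X$2$2 - X$1$1) + p$4 * X$2$3 - p$3 * X$3$1"
    "M$2$2 = X$2$1 - p$2 * X$1$2 - p$3 * X$3$2"
    "M$2$3 = p$3 * (X$2$2 - X$3$3) - 3 * p$1 * X$2$3 - p$2 * X$1$3"
    "M$3$1 = 3 * p$1 * X$3$1 + p$2 * X$3$2 + p$4 * (X$3$3 - X$1$1)"
    "M$3$2 = X$3$1 + 3 * p$1 * X$3$2 - p$4 * X$1$2"
    "M$3$3 = p$3 * X$3$2 - p$4 * X$1$3"
  by (simp_all add: M_def matrix_matrix_mult_def sum_3 algebra_simps)

lemma commutator_sR_in_tangent_iff:
  fixes X :: "real^3^3"
  shows "X ** sR p - sR p ** X \<in> sR_tangent \<longleftrightarrow>
    X$2$2 = X$1$1 \<and>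
    X$2$3 = p$3 * X$1$2 - 3 * p$1 * X$1$3 \<and>
    X$3$1 = p$4 * X$1$2 - 3 * p$1 * X$3$2 \<and>
    X$2$1 = p$2 * X$1$2 + (p$3 * X$3$2 + p$4 * X$1$3) / 2"
  unfolding sR_tangent_def mem_Collect_eq commutator_sR_nth by (auto simp: field_simps)

lemma tcoords_commutator_sR:
  fixes X :: "real^3^3"
  assumes "X ** sR p - sR p ** X \<in> sR_tangent"
  shows "tcoords (X ** sR p - sR p ** X) =
    (X$1$1 - X$3$3) *\<^sub>R v1 p + (3 * X$1$2) *\<^sub>R v2 p + X$1$3 *\<^sub>R v3 p + X$3$2 *\<^sub>R v4 p"
proof -
  from assms have solved:
    "X$2$2 = X$1$1"
    "X$2$3 = p$3 * X$1$2 - 3 * p$1 * X$1$3"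
    "X$3$1 = p$4 * X$1$2 - 3 * p$1 * X$3$2"
    "X$2$1 = p$2 * X$1$2 + (p$3 * X$3$2 + p$4 * X$1$3) / 2"
    unfolding commutator_sR_in_tangent_iff by simp_all
  show ?thesis
    unfolding tcoords_def commutator_sR_nth solved
    by (simp add: vec_eq_iff forall_4 v1_def v2_def v3_def v4_def field_simps power2_eq_square)
qed

text \<open>The solution of the tangency conditions with free entries \<open>X\<^sub>1\<^sub>1, X\<^sub>1\<^sub>2, X\<^sub>1\<^sub>3, X\<^sub>3\<^sub>2\<close> chosen so
  that the coefficients in \<open>tcoords_commutator_sR\<close> become \<open>c\<^sub>1, \<dots>, c\<^sub>4\<close>, and
  \<open>X\<^sub>3\<^sub>3 = 0\<close> (adding the identity does not change the commutator).\<close>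

definition lift_matrix :: "real^4 \<Rightarrow> real \<Rightarrow> real \<Rightarrow> real \<Rightarrow> real \<Rightarrow> real^3^3" where
  "lift_matrix p c1 c2 c3 c4 = vector [
     vector [c1, c2 / 3, c3],
     vector [p$2 * (c2 / 3) + (p$3 * c4 + p$4 * c3) / 2, c1, p$3 * (c2 / 3) - 3 * p$1 * c3],
     vector [p$4 * (c2 / 3) - 3 * p$1 * c4, c4, 0]]"

lemma commutator_lift_matrix_in_tangent:
  "lift_matrix p c1 c2 c3 c4 ** sR p - sR p ** lift_matrix p c1 c2 c3 c4 \<in> sR_tangent"
  by (simp add: commutator_sR_in_tangent_iff lift_matrix_def)

lemma tcoords_commutator_lift_matrix:
  "tcoords (lift_matrix p c1 c2 c3 c4 ** sR p - sR p ** lift_matrix p c1 c2 c3 c4) =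
    c1 *\<^sub>R v1 p + c2 *\<^sub>R v2 p + c3 *\<^sub>R v3 p + c4 *\<^sub>R v4 p"
  using tcoords_commutator_sR[OF commutator_lift_matrix_in_tangent] by (simp add: lift_matrix_def)

lemma smooth_lift_matrix:
  assumes "smooth f1" "smooth f2" "smooth f3" "smooth f4"
  shows "smooth (\<lambda>p. lift_matrix p (f1 p) (f2 p) (f3 p) (f4 p))"
  unfolding lift_matrix_def
  by (intro smooth_vector_3 smooth_add smooth_diff smooth_mult smooth_divide_const smooth_const
      smooth_coordinate assms)

lemma strongly_tangential_imp_combination:
  assumes "V \<in> strongly_tangential"
  shows "\<exists>f1 f2 f3 f4. smooth f1 \<and> smooth f2 \<and> smooth f3 \<and> smooth f4 \<and>
    (\<forall>p. V p = f1 p *\<^sub>R v1 p + f2 p *\<^sub>R v2 p + f3 p *\<^sub>R v3 p + f4 p *\<^sub>R v4 p)"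
proof -
  obtain \<phi> where "smooth \<phi>" and tangent: "\<And>p. alpha \<phi> p \<in> sR_tangent"
    and V: "\<And>p. V p = tcoords (alpha \<phi> p)"
    using assms unfolding strongly_tangential_def by blast
  have "V p = (\<phi> p$1$1 - \<phi> p$3$3) *\<^sub>R v1 p + (3 * \<phi> p$1$2) *\<^sub>R v2 p
      + \<phi> p$1$3 *\<^sub>R v3 p + \<phi> p$3$2 *\<^sub>R v4 p" for p
    using tcoords_commutator_sR tangent V unfolding alpha_def by metis
  moreover have "smooth (\<lambda>p. \<phi> p $ i $ j)" for i j
    using \<open>smooth \<phi>\<close> by (intro smooth_vec_nth)
  ultimately show ?thesis
    by (intro exI[of _ "\<lambda>p. \<phi> p$1$1 - \<phi> p$3$3"] exI[of _ "\<lambda>p. 3 * \<phi> p$1$2"]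
        exI[of _ "\<lambda>p. \<phi> p$1$3"] exI[of _ "\<lambda>p. \<phi> p$3$2"])
      (simp add: smooth_diff smooth_mult smooth_const)
qed

lemma combination_in_strongly_tangential:
  assumes "smooth f1" "smooth f2" "smooth f3" "smooth f4"
    and "\<And>p. V p = f1 p *\<^sub>R v1 p + f2 p *\<^sub>R v2 p + f3 p *\<^sub>R v3 p + f4 p *\<^sub>R v4 p"
  shows "V \<in> strongly_tangential"
  unfolding strongly_tangential_def alpha_def
  using smooth_lift_matrix[OF assms(1-4)] commutator_lift_matrix_in_tangent
    tcoords_commutator_lift_matrix assms(5)
  by (intro CollectI exI[of _ "\<lambda>p. lift_matrix p (f1 p) (f2 p) (f3 p) (f4 p)"]) simp

theorem lemma7p4:
  shows "strongly_tangential =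
    {V. \<exists>f1 f2 f3 f4 :: real^4 \<Rightarrow> real.
          smooth f1 \<and> smooth f2 \<and> smooth f3 \<and> smooth f4 \<and>
          (\<forall>p. V p = f1 p *\<^sub>R v1 p + f2 p *\<^sub>R v2 p + f3 p *\<^sub>R v3 p + f4 p *\<^sub>R v4 p)}"
  by (blast dest: strongly_tangential_imp_combination intro: combination_in_strongly_tangential)

end
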